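(* Let $b$ be a prime, $k\in\mathbb{N}$, and $c:=\mu_1(k)$. Then for every $L\in\mathcal{L}_{\infty,\infty}$, the integer $\ell\in\mathbb{N}$ with $\vec{\ell}=L^\top\vec{k}$ satisfies $\mu_1(\ell)=c$. Moreover, for every $k'\in\mathbb{N}$ with $\mu_1(k')=c$ and every integer $n\ge c$, \[\Pr\left[L^\top\vec{k}=\vec{k}'\;\middle|\;L\in\mathcal{L}_{\infty,n}\right]=\frac{1}{(b-1)b^{c-1}},\] where $L$ is drawn at random from $\mathcal{L}_{\infty,n}$ and $\vec k'$ is identified with its first $n$ digits.
   Context: $\mathbb{F}_b=\{0,\dots,b-1\}$ is the field with $b$ elements. For $k\in\mathbb{N}_0$ with $b$-adic expansion $k=\kappa_0+\kappa_1b+\cdots$, write $\vec{k}=(\kappa_0,\kappa_1,\ldots)^\top\in\mathbb{F}_b^{\mathbb{N}}$. NRT weight: for $k\in\mathbb{N}$ written as $k=\kappa_1b^{c_1-1}+\cdots+\kappa_vb^{c_v-1}$ with $\kappa_i\in\{1,\dots,b-1\}$ and $c_1>\cdots>c_v>0$, $\mu_1(k)=c_1$; $\mu_1(0)=0$. For $w,n\in\mathbb{N}\cup\{\infty\}$, $\mathcal{L}_{w,n}$ is the set of matrices $L=(\ell_{i,j})\in\mathbb{F}_b^{w\times n}$ with $\ell_{i,j}=0$ if $i<j$ and $\ell_{i,j}\neq0$ if $i=j$. A random element of $\mathcal{L}_{w,n}$ is obtained by choosing each entry independently: diagonal entries uniformly from $\mathbb{F}_b\setminus\{0\}$, entries with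 $i>j$ uniformly from $\mathbb{F}_b$, entries with $i<j$ equal to $0$. For $L\in\mathcal{L}_{\infty,n}$, $L^\top\vec k\in\mathbb{F}_b^n$ is the matrix-vector product over $\mathbb{F}_b$ (a finite sum since $\vec k$ has finitely many nonzero entries). *)

theory Defs
  imports "HOL-Probability.Probability"
begin

text \<open>F_b is represented by {0..<b} :: nat set with arithmetic modulo b.\<close>

definition digit :: "nat \<Rightarrow> nat \<Rightarrow> nat \<Rightarrow> nat" where
  "digit b k i = k div b ^ i mod b"

definition mu1 :: "nat \<Rightarrow> nat \<Rightarrow> nat" where
  "mu1 b k = (if k = 0 then 0 else Suc (GREATEST i. digit b k i \<noteq> 0))"

text \<open>Matrices L = (l_{i,j}) are functions on index pairs (i,j), 0-based.
  Membership in L_{infinity,infinity}.\<close>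
definition L_inf_inf :: "nat \<Rightarrow> (nat \<times> nat \<Rightarrow> nat) set" where
  "L_inf_inf b = {L. (\<forall>i j. L (i,j) < b) \<and> (\<forall>i j. i < j \<longrightarrow> L (i,j) = 0)
                     \<and> (\<forall>i. L (i,i) \<noteq> 0)}"

definition LTk :: "nat \<Rightarrow> (nat \<times> nat \<Rightarrow> nat) \<Rightarrow> nat \<Rightarrow> nat \<Rightarrow> nat" where
  "LTk b L k j = (\<Sum>i\<in>{i. digit b k i \<noteq> 0}. L (i,j) * digit b k i) mod b"

definition entry_pmf :: "nat \<Rightarrow> nat \<Rightarrow> nat \<Rightarrow> nat pmf" where
  "entry_pmf b i j = (if i < j then return_pmf 0
                      else if i = j then pmf_of_set {1..<b} else pmf_of_set {..<b})"

text \<open>Random element of L_{infinity,n}: independent entries, rows indexed by all of nat,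
  columns by {..<n}.\<close>
definition random_L :: "nat \<Rightarrow> nat \<Rightarrow> (nat \<times> nat \<Rightarrow> nat) measure" where
  "random_L b n = (\<Pi>\<^sub>M ij\<in>(UNIV :: nat set) \<times> {..<n}. measure_pmf (entry_pmf b (fst ij) (snd ij)))"

end

theory Submission
  imports Defs "HOL-Number_Theory.Cong"
begin

text \<open>Since the digits of k vanish from position c = mu1 k on, entry j of L^T k is
  (sum over j \<le> i < c of L(i,j) k_i) mod b. It vanishes for j \<ge> c, and for j = c - 1 it is
  L(c-1,c-1) k_(c-1) mod b, a product of two units of F_b; hence mu1 l = c.

  For the probability, L^T k = k' amounts to one linear congruence per column j < c, and the
  entry L(c-1,j) occurs in column j only, with the unit coefficient k_(c-1). Whatever the other
  entries are, the congruence of column j therefore holds for exactly one value of L(c-1,j):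
  with probability 1/b for j < c - 1, where the entry is uniform on F_b, and 1/(b-1) for
  j = c - 1, where it is uniform on the units and the solution is a unit because k'_(c-1) \<noteq> 0.
  Integrating out these c pivot entries one at a time multiplies the probabilities.\<close>

lemma distr_Pi_pmf_PiM:
  fixes p :: "'i \<Rightarrow> 'a pmf"
  assumes fin: "finite J"
  shows "distr (measure_pmf (Pi_pmf J d p)) (Pi\<^sub>M J (\<lambda>i. measure_pmf (p i))) (\<lambda>x. restrict x J)
       = Pi\<^sub>M J (\<lambda>i. measure_pmf (p i))"
proof (rule product_sigma_finite.PiM_eqI)
  interpret product_prob_space "\<lambda>i. measure_pmf (p i)"
    by (intro product_prob_spaceI measure_pmf.prob_space_axioms)
  show "product_sigma_finite (\<lambda>i. measure_pmf (p i))" by unfold_locales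
next
  fix A assume A: "\<And>i. i \<in> J \<Longrightarrow> A i \<in> sets (measure_pmf (p i))"
  have "Pi\<^sub>E J A \<in> sets (Pi\<^sub>M J (\<lambda>i. measure_pmf (p i)))"
    using A by (intro sets_PiM_I_finite fin) auto
  hence "emeasure (distr (measure_pmf (Pi_pmf J d p)) (Pi\<^sub>M J (\<lambda>i. measure_pmf (p i)))
            (\<lambda>x. restrict x J)) (Pi\<^sub>E J A) =
         emeasure (measure_pmf (Pi_pmf J d p)) ((\<lambda>x. restrict x J) -` Pi\<^sub>E J A)"
    by (subst emeasure_distr) (auto simp: space_PiM)
  also have "\<dots> = emeasure (measure_pmf (Pi_pmf J d p)) (PiE_dflt J d A)"
    by (intro emeasure_eq_AE AE_pmfI) (auto simp: PiE_dflt_def set_Pi_pmf fin)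
  also have "\<dots> = (\<Prod>i\<in>J. emeasure (measure_pmf (p i)) (A i))"
    by (simp add: measure_pmf.emeasure_eq_measure measure_Pi_pmf_PiE_dflt fin prod_ennreal)
  finally show "emeasure (distr (measure_pmf (Pi_pmf J d p)) (Pi\<^sub>M J (\<lambda>i. measure_pmf (p i)))
            (\<lambda>x. restrict x J)) (Pi\<^sub>E J A) = (\<Prod>i\<in>J. emeasure (measure_pmf (p i)) (A i))" .
qed (use fin in auto)

lemma sets_PiM_measure_pmf_countable:
  fixes p :: "'i \<Rightarrow> 'a::countable pmf"
  assumes fin: "finite J" and X: "X \<subseteq> space (Pi\<^sub>M J (\<lambda>i. measure_pmf (p i)))"
  shows "X \<in> sets (Pi\<^sub>M J (\<lambda>i. measure_pmf (p i)))"
proof -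
  have "countable (Pi\<^sub>E J (\<lambda>_. UNIV :: 'a set))" by (rule countable_PiE[OF fin]) simp
  then have "countable X" using X by (auto simp: space_PiM intro: countable_subset)
  moreover have "{g} \<in> sets (Pi\<^sub>M J (\<lambda>i. measure_pmf (p i)))" if "g \<in> X" for g
  proof -
    have "g \<in> extensional J" using that X by (auto simp: space_PiM PiE_def)
    then have "{g} = Pi\<^sub>E J (\<lambda>x. {g x})" by (rule PiE_singleton[symmetric])
    also have "\<dots> \<in> sets (Pi\<^sub>M J (\<lambda>i. measure_pmf (p i)))" by (rule sets_PiM_I_finite[OF fin]) simp
    finally show ?thesis .
  qed
  ultimately have "(\<Union>g\<in>X. {g}) \<in> sets (Pi\<^sub>M J (\<lambda>i. measure_pmf (p i)))"
    by (intro sets.countable_UN'') auto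
  then show ?thesis by simp
qed

lemma measure_PiM_pmf_eq_Pi_pmf:
  fixes p :: "'i \<Rightarrow> 'a::countable pmf"
  assumes fin: "finite J" and "J \<subseteq> I" and Q: "\<And>f. Q (restrict f J) = Q f"
  shows "measure (Pi\<^sub>M I (\<lambda>i. measure_pmf (p i))) {f \<in> space (Pi\<^sub>M I (\<lambda>i. measure_pmf (p i))). Q f}
       = measure_pmf.prob (Pi_pmf J d p) {f. Q f}"
proof -
  let ?M = "\<lambda>i. measure_pmf (p i)"
  interpret product_prob_space ?M I
    by (intro product_prob_spaceI measure_pmf.prob_space_axioms)
  define X where "X = {g \<in> space (Pi\<^sub>M J ?M). Q g}"
  have X: "X \<in> sets (Pi\<^sub>M J ?M)"
    unfolding X_def by (rule sets_PiM_measure_pmf_countable[OF fin]) auto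
  have restrict_in: "restrict f J \<in> space (Pi\<^sub>M J ?M)" for f by (simp add: space_PiM)
  have "{f \<in> space (Pi\<^sub>M I ?M). Q f} = prod_emb I ?M J X"
    unfolding prod_emb_def X_def using restrict_in Q by (auto simp: space_PiM)
  then have "measure (Pi\<^sub>M I ?M) {f \<in> space (Pi\<^sub>M I ?M). Q f} = measure (Pi\<^sub>M J ?M) X"
    using emeasure_PiM_emb'[OF \<open>J \<subseteq> I\<close> fin X] by (simp add: measure_def)
  also have "\<dots> = measure (distr (measure_pmf (Pi_pmf J d p)) (Pi\<^sub>M J ?M) (\<lambda>x. restrict x J)) X"
    by (simp only: distr_Pi_pmf_PiM[OF fin])
  also have "\<dots> = measure_pmf.prob (Pi_pmf J d p) ((\<lambda>x. restrict x J) -` X)"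
    using X restrict_in by (subst measure_distr) auto
  also have "(\<lambda>x. restrict x J) -` X = {f. Q f}"
    unfolding X_def using restrict_in Q by auto
  finally show ?thesis .
qed

lemma measure_Pi_pmf_independent_pivots:
  fixes p :: "'i \<Rightarrow> 'a pmf" and x :: "'j \<Rightarrow> 'i" and P :: "'j \<Rightarrow> ('i \<Rightarrow> 'a) \<Rightarrow> bool"
  assumes "finite A" and "finite S" and "inj_on x S" and "x ` S \<inter> A = {}"
    and "\<And>j j' f y. j \<in> S \<Longrightarrow> j' \<in> S \<Longrightarrow> j' \<noteq> j \<Longrightarrow> P j (f(x j' := y)) = P j f"
    and "\<And>j f. j \<in> S \<Longrightarrow> measure_pmf.prob (p (x j)) {y. P j (f(x j := y))} = w j"
  shows "measure_pmf.prob (Pi_pmf (A \<union> x ` S) d p) {f. \<forall>j\<in>S. P j f} = (\<Prod>j\<in>S. w j)"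
  using assms(2-)
proof (induction S rule: finite_induct)
  case empty
  then show ?case by simp
next
  case (insert j S)
  let ?B = "A \<union> x ` S" and ?Q = "{f. \<forall>j\<in>S. P j f}" and ?E = "{f. \<forall>j\<in>insert j S. P j f}"
  have fin: "finite ?B" using \<open>finite A\<close> \<open>finite S\<close> by simp
  have xj: "x j \<notin> ?B" using insert.prems(1,2) insert.hyps(2) by auto
  have w_nonneg: "w i \<ge> 0" if "i \<in> insert j S" for i
    using insert.prems(4)[OF that] measure_nonneg by metis
  have IH: "measure_pmf.prob (Pi_pmf ?B d p) ?Q = (\<Prod>i\<in>S. w i)"
    using insert.prems by (intro insert.IH) (auto simp: inj_on_def)
  have preimage: "(\<lambda>y. f(x j := y)) -` ?E = (if f \<in> ?Q then {y. P j (f(x j := y))} else {})"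
    for f
  proof -
    have "P i (f(x j := y)) = P i f" if "i \<in> S" for i y
      using insert.prems(3) insert.hyps(2) that by (metis insertCI)
    then show ?thesis by auto
  qed
  have step: "emeasure (measure_pmf (map_pmf (\<lambda>y. f(x j := y)) (p (x j)))) ?E
        = ennreal (w j) * indicator ?Q f" for f
    unfolding emeasure_map_pmf preimage
    using insert.prems(4)[of j f] by (simp add: measure_pmf.emeasure_eq_measure fun_upd_def)
  have "Pi_pmf (insert (x j) ?B) d p
        = bind_pmf (Pi_pmf ?B d p) (\<lambda>f. map_pmf (\<lambda>y. f(x j := y)) (p (x j)))"
    unfolding Pi_pmf_insert'[OF fin xj] map_pmf_def by (rule bind_commute_pmf)
  then have "emeasure (measure_pmf (Pi_pmf (insert (x j) ?B) d p)) ?E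
        = (\<integral>\<^sup>+f. ennreal (w j) * indicator ?Q f \<partial>measure_pmf (Pi_pmf ?B d p))"
    by (simp only: emeasure_bind_pmf step)
  also have "\<dots> = ennreal (w j * (\<Prod>i\<in>S. w i))"
    using IH w_nonneg
    by (simp add: nn_integral_cmult_indicator measure_pmf.emeasure_eq_measure ennreal_mult
        prod_nonneg)
  finally have "measure_pmf.prob (Pi_pmf (insert (x j) ?B) d p) ?E = w j * (\<Prod>i\<in>S. w i)"
    using w_nonneg
    by (simp add: measure_pmf.emeasure_eq_measure prod_nonneg)
  moreover have "A \<union> x ` insert j S = insert (x j) ?B" by auto
  ultimately show ?case using insert.hyps by simp
qed

lemma digit_less: "0 < b \<Longrightarrow> digit b k i < b"
  by (simp add: digit_def)

lemma digit_Suc: "digit b k (Suc i) = digit b (k div b) i"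
  by (simp add: digit_def div_mult2_eq mult.commute)

lemma digit_sum_power:
  assumes "\<And>j. ds j < b"
  shows "digit b (\<Sum>j<m. ds j * b ^ j) i = (if i < m then ds i else 0)"
  using assms
proof (induction m arbitrary: ds i)
  case 0
  then show ?case by (simp add: digit_def)
next
  case (Suc m)
  let ?rest = "\<Sum>j<m. ds (Suc j) * b ^ j"
  have sum_eq: "(\<Sum>j<Suc m. ds j * b ^ j) = ds 0 + b * ?rest"
    by (subst sum.lessThan_Suc_shift) (simp add: sum_distrib_left algebra_simps)
  show ?case
  proof (cases i)
    case 0
    then show ?thesis using Suc.prems[of 0] unfolding sum_eq by (simp add: digit_def)
  next
    case (Suc i')
    have "(ds 0 + b * ?rest) div b = ?rest"
      using Suc.prems[of 0] by simp
    then have "digit b (ds 0 + b * ?rest) (Suc i') = digit b ?rest i'"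
      by (simp only: digit_Suc)
    then show ?thesis
      using Suc.IH[of "\<lambda>j. ds (Suc j)" i'] Suc.prems Suc unfolding sum_eq by simp
  qed
qed

lemma ex_number_with_digits:
  assumes "\<And>j. ds j < b" and "\<And>j. c \<le> j \<Longrightarrow> ds j = 0"
  shows "\<exists>l. \<forall>j. digit b l j = ds j"
  using assms by (intro exI[of _ "\<Sum>j<c. ds j * b ^ j"]) (simp add: digit_sum_power not_less)

lemma ex_digit_nonzero:
  assumes "2 \<le> b" and "k \<noteq> 0"
  shows "\<exists>i. digit b k i \<noteq> 0"
  using assms(2)
proof (induction k rule: less_induct)
  case (less k)
  show ?case
  proof (cases "b dvd k")
    case False
    then have "digit b k 0 \<noteq> 0" by (simp add: digit_def dvd_eq_mod_eq_0)
    then show ?thesis ..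
  next
    case True
    then have "k div b \<noteq> 0" "k div b < k" using less.prems assms(1) by auto
    then obtain i where "digit b (k div b) i \<noteq> 0" using less.IH by blast
    then show ?thesis by (metis digit_Suc)
  qed
qed

lemma digit_nonzero_imp_less:
  assumes "2 \<le> b" and "digit b k i \<noteq> 0"
  shows "i < k"
proof -
  have "k div b ^ i \<noteq> 0"
    using assms(2) mod_less_eq_dividend[of "k div b ^ i" b] unfolding digit_def by linarith
  then have "b ^ i \<le> k" by (simp add: div_eq_0_iff)
  moreover have "i < 2 ^ i" by (rule less_exp)
  moreover have "2 ^ i \<le> b ^ i" using assms(1) by (simp add: power_mono)
  ultimately show ?thesis by linarith
qed

lemma mu1_pos: "k \<noteq> 0 \<Longrightarrow> 0 < mu1 b k"
  by (simp add: mu1_def)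

lemma
  assumes "2 \<le> b" and "k \<noteq> 0"
  shows digit_mu1_minus_1_nonzero: "digit b k (mu1 b k - 1) \<noteq> 0"
    and digit_eq_0_if_mu1_le: "mu1 b k \<le> i \<Longrightarrow> digit b k i = 0"
proof -
  let ?g = "GREATEST i. digit b k i \<noteq> 0"
  obtain i0 where i0: "digit b k i0 \<noteq> 0" using ex_digit_nonzero[OF assms] ..
  have bound: "\<forall>i. digit b k i \<noteq> 0 \<longrightarrow> i \<le> k"
    using digit_nonzero_imp_less[OF assms(1)] by (meson less_imp_le)
  have mu1: "mu1 b k = Suc ?g" using assms(2) by (simp add: mu1_def)
  show "digit b k (mu1 b k - 1) \<noteq> 0"
    unfolding mu1 using GreatestI_nat[of "\<lambda>i. digit b k i \<noteq> 0" i0 k] i0 bound by simp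
  show "digit b k i = 0" if "mu1 b k \<le> i"
    using that Greatest_le_nat[of "\<lambda>i. digit b k i \<noteq> 0" i k] bound unfolding mu1
    by (metis not_less_eq_eq)
qed

lemma mu1_eqI:
  assumes "0 < c" and "digit b l (c - 1) \<noteq> 0" and "\<And>i. c \<le> i \<Longrightarrow> digit b l i = 0"
  shows "mu1 b l = c"
proof -
  have "l \<noteq> 0"
  proof
    assume "l = 0"
    then show False using assms(2) by (simp add: digit_def)
  qed
  moreover have "(GREATEST i. digit b l i \<noteq> 0) = c - 1"
  proof (rule Greatest_equality)
    fix i assume "digit b l i \<noteq> 0"
    then have "\<not> c \<le> i" using assms(3)[of i] by auto
    then show "i \<le> c - 1" by simp
  qed (rule assms(2))
  ultimately show ?thesis using assms(1) by (simp add: mu1_def)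
qed

lemma prime_mult_mod_nonzero:
  fixes b x y :: nat
  assumes "prime b" and "x mod b \<noteq> 0" and "y mod b \<noteq> 0"
  shows "x * y mod b \<noteq> 0"
  using assms by (auto simp: prime_dvd_mult_iff simp flip: dvd_eq_mod_eq_0)

lemma prime_affine_mod_unique_solution:
  fixes b a r t :: nat
  assumes "prime b" and "a mod b \<noteq> 0" and "t < b"
  obtains y0 where "y0 < b" and "{..<b} \<inter> {y. (y * a + r) mod b = t} = {y0}"
proof -
  define h where "h y = (y * a + r) mod b" for y
  have "coprime a b"
    using assms(1,2) prime_imp_coprime[of b a] by (simp add: coprime_commute dvd_eq_mod_eq_0)
  then have inj: "inj_on h {..<b}"
    by (intro inj_onI) (auto simp: h_def cong_def[symmetric] cong_add_rcancel_nat
        cong_mult_rcancel_nat cong_less_modulus_unique_nat)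
  have "h ` {..<b} \<subseteq> {..<b}" using assms(1) by (auto simp: h_def prime_gt_0_nat)
  then have "h ` {..<b} = {..<b}" using endo_inj_surj[OF finite_lessThan _ inj] by simp
  then obtain y0 where "y0 < b" "h y0 = t" using assms(3) by (metis imageE lessThan_iff)
  moreover have "{..<b} \<inter> {y. h y = t} = {y0}"
    using calculation inj_onD[OF inj] by fastforce
  ultimately show thesis using that[of y0] by (simp add: h_def)
qed

lemma LTk_eq_column_sum:
  assumes "\<And>i. c \<le> i \<Longrightarrow> digit b k i = 0" and "\<And>i. i < j \<Longrightarrow> i < c \<Longrightarrow> L (i, j) = 0"
  shows "LTk b L k j = (\<Sum>i\<in>{j..<c}. L (i, j) * digit b k i) mod b"
proof -
  have "{i. digit b k i \<noteq> 0} \<subseteq> {..<c}"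
  proof
    fix i assume "i \<in> {i. digit b k i \<noteq> 0}"
    then show "i \<in> {..<c}" using assms(1)[of i] by (cases "c \<le> i") auto
  qed
  then have "(\<Sum>i | digit b k i \<noteq> 0. L (i, j) * digit b k i) = (\<Sum>i<c. L (i, j) * digit b k i)"
    by (intro sum.mono_neutral_left) auto
  also have "\<dots> = (\<Sum>i\<in>{j..<c}. L (i, j) * digit b k i)"
    using assms(2) by (intro sum.mono_neutral_right) auto
  finally show ?thesis unfolding LTk_def by simp
qed

lemma LTk_preserves_mu1:
  assumes "prime b" and "k \<noteq> 0" and L: "L \<in> L_inf_inf b"
  shows "\<exists>l. (\<forall>j. digit b l j = LTk b L k j) \<and> mu1 b l = mu1 b k"
proof -
  let ?c = "mu1 b k"
  have b: "2 \<le> b" using assms(1) by (rule prime_ge_2_nat)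
  have column: "LTk b L k j = (\<Sum>i\<in>{j..<?c}. L (i, j) * digit b k i) mod b" for j
    using L digit_eq_0_if_mu1_le[OF b assms(2)]
    by (intro LTk_eq_column_sum) (auto simp: L_inf_inf_def)
  obtain l where l: "\<forall>j. digit b l j = LTk b L k j"
    using ex_number_with_digits[of "LTk b L k" b ?c] b by (auto simp: column)
  have "{?c - 1..<?c} = {?c - 1}" using mu1_pos[OF assms(2), of b] by auto
  then have "LTk b L k (?c - 1) = L (?c - 1, ?c - 1) * digit b k (?c - 1) mod b"
    by (simp add: column)
  also have "\<dots> \<noteq> 0"
    using L b digit_mu1_minus_1_nonzero[OF b assms(2)]
    by (intro prime_mult_mod_nonzero[OF assms(1)]) (auto simp: L_inf_inf_def digit_less)
  finally have "mu1 b l = ?c"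
    using l mu1_pos[OF assms(2)] by (intro mu1_eqI) (simp_all add: column)
  with l show ?thesis by auto
qed

lemma prob_pivot_entry:
  fixes f :: "nat \<times> nat \<Rightarrow> nat"
  assumes "prime b" and "j < c" and "\<kappa> (c - 1) mod b \<noteq> 0" and "t < b"
    and "j = c - 1 \<Longrightarrow> t \<noteq> 0"
  shows "measure_pmf.prob (entry_pmf b (c - 1) j)
           {y. (\<Sum>i\<in>{j..<c}. (f((c - 1, j) := y)) (i, j) * \<kappa> i) mod b = t}
       = (if j = c - 1 then 1 / (real b - 1) else 1 / real b)"
proof -
  define r where "r = (\<Sum>i\<in>{j..<c - 1}. f (i, j) * \<kappa> i)"
  have "(\<Sum>i\<in>{j..<c}. (f((c - 1, j) := y)) (i, j) * \<kappa> i) = y * \<kappa> (c - 1) + r" for y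
  proof -
    have "{j..<c} = insert (c - 1) {j..<c - 1}" using assms(2) by auto
    moreover have "(\<Sum>i\<in>{j..<c - 1}. (f((c - 1, j) := y)) (i, j) * \<kappa> i) = r"
      unfolding r_def by (intro sum.cong) auto
    ultimately show ?thesis by simp
  qed
  then have event: "{y. (\<Sum>i\<in>{j..<c}. (f((c - 1, j) := y)) (i, j) * \<kappa> i) mod b = t}
      = {y. (y * \<kappa> (c - 1) + r) mod b = t}"
    by simp
  obtain y0 where "y0 < b" and y0: "{..<b} \<inter> {y. (y * \<kappa> (c - 1) + r) mod b = t} = {y0}"
    using prime_affine_mod_unique_solution[OF assms(1,3,4)] .
  have b: "2 \<le> b" using assms(1) by (rule prime_ge_2_nat)
  show ?thesis
  proof (cases "j = c - 1")
    case True
    have "y0 \<in> {..<b} \<inter> {y. (y * \<kappa> (c - 1) + r) mod b = t}"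
      unfolding y0 by simp
    moreover have "r = 0" using True by (simp add: r_def)
    ultimately have "y0 \<noteq> 0" using assms(5)[OF True] by (cases "y0 = 0") simp_all
    have "{1..<b} \<inter> {y. (y * \<kappa> (c - 1) + r) mod b = t} = {y0}"
    proof (rule set_eqI)
      fix y
      show "y \<in> {1..<b} \<inter> {y. (y * \<kappa> (c - 1) + r) mod b = t} \<longleftrightarrow> y \<in> {y0}"
        using y0[THEN eqset_imp_iff, of y] \<open>y0 \<noteq> 0\<close> by auto
    qed
    then show ?thesis
      unfolding event using True b by (simp add: entry_pmf_def measure_pmf_of_set of_nat_diff)
  next
    case False
    then show ?thesis
      unfolding event using assms(2) b y0
      by (simp add: entry_pmf_def measure_pmf_of_set lessThan_empty_iff)
  qed
qed

lemma prod_pivot_probabilities: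
  assumes "0 < c"
  shows "(\<Prod>j<c. if j = c - 1 then 1 / (real b - 1) else 1 / real b)
       = 1 / ((real b - 1) * real b ^ (c - 1))"
proof -
  obtain c' where c: "c = Suc c'" using assms gr0_implies_Suc by blast
  have "(\<Prod>j<c'. if j = c' then 1 / (real b - 1) else 1 / real b) = (\<Prod>j<c'. 1 / real b)"
    by (intro prod.cong) auto
  then show ?thesis by (simp add: c power_one_over)
qed

lemma LTk_eq_digits_iff_columns:
  assumes "c \<le> n" and "\<And>i j. i < j \<Longrightarrow> i < c \<Longrightarrow> j < n \<Longrightarrow> L (i, j) = 0"
    and "\<And>i. c \<le> i \<Longrightarrow> digit b k i = 0" and "\<And>i. c \<le> i \<Longrightarrow> digit b k' i = 0"
  shows "(\<forall>j<n. LTk b L k j = digit b k' j)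
     \<longleftrightarrow> (\<forall>j\<in>{..<c}. (\<Sum>i\<in>{j..<c}. L (i, j) * digit b k i) mod b = digit b k' j)"
proof -
  have "LTk b L k j = (\<Sum>i\<in>{j..<c}. L (i, j) * digit b k i) mod b" if "j < n" for j
    using that assms(2,3) by (intro LTk_eq_column_sum) auto
  then have "LTk b L k j = digit b k' j
      \<longleftrightarrow> (j < c \<longrightarrow> (\<Sum>i\<in>{j..<c}. L (i, j) * digit b k i) mod b = digit b k' j)"
    if "j < n" for j
    using that assms(4)[of j] by (cases "j < c") auto
  then show ?thesis using assms(1) by auto
qed

lemma measure_Pi_pmf_column_congruences:
  fixes b c n :: nat and \<kappa> t :: "nat \<Rightarrow> nat"
  assumes "prime b" and "0 < c" and "c \<le> n"
    and "\<kappa> (c - 1) mod b \<noteq> 0" and "\<And>j. j < c \<Longrightarrow> t j < b" and "t (c - 1) \<noteq> 0"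
  shows "measure_pmf.prob (Pi_pmf ({..<c} \<times> {..<n}) 0 (\<lambda>ij. entry_pmf b (fst ij) (snd ij)))
           {f. \<forall>j\<in>{..<c}. (\<Sum>i\<in>{j..<c}. f (i, j) * \<kappa> i) mod b = t j}
       = 1 / ((real b - 1) * real b ^ (c - 1))"
proof -
  define pivot :: "nat \<Rightarrow> nat \<times> nat" where "pivot j = (c - 1, j)" for j
  define A where "A = {..<c} \<times> {..<n} - pivot ` {..<c}"
  have "{..<c} \<times> {..<n} = A \<union> pivot ` {..<c}"
    using assms(2,3) by (auto simp: A_def pivot_def)
  moreover have "measure_pmf.prob (Pi_pmf (A \<union> pivot ` {..<c}) 0 (\<lambda>ij. entry_pmf b (fst ij) (snd ij)))
           {f. \<forall>j\<in>{..<c}. (\<Sum>i\<in>{j..<c}. f (i, j) * \<kappa> i) mod b = t j}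
       = (\<Prod>j<c. if j = c - 1 then 1 / (real b - 1) else 1 / real b)"
  proof (rule measure_Pi_pmf_independent_pivots)
    fix j f assume "j \<in> {..<c}"
    then show "measure_pmf.prob (entry_pmf b (fst (pivot j)) (snd (pivot j)))
        {y. (\<Sum>i\<in>{j..<c}. (f(pivot j := y)) (i, j) * \<kappa> i) mod b = t j}
      = (if j = c - 1 then 1 / (real b - 1) else 1 / real b)"
      unfolding pivot_def fst_conv snd_conv using assms
      by (intro prob_pivot_entry) auto
  qed (auto simp: A_def pivot_def inj_on_def intro!: sum.cong)
  ultimately show ?thesis using prod_pivot_probabilities[OF assms(2)] by simp
qed

lemma measure_random_L_LTk_eq_digits:
  assumes "prime b" and "k \<noteq> 0" and "k' \<noteq> 0" and "mu1 b k' = mu1 b k" and "mu1 b k \<le> n"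
  shows "measure (random_L b n) {L \<in> space (random_L b n). \<forall>j<n. LTk b L k j = digit b k' j}
       = 1 / ((real b - 1) * real b ^ (mu1 b k - 1))"
proof -
  define c where "c = mu1 b k"
  define J where "J = {..<c} \<times> {..<n}"
  define p where "p ij = entry_pmf b (fst ij) (snd ij)" for ij
  have b: "2 \<le> b" using assms(1) by (rule prime_ge_2_nat)
  have "c \<le> n" unfolding c_def by (rule assms(5))
  have high: "digit b k i = 0" "digit b k' i = 0" if "c \<le> i" for i
    using that digit_eq_0_if_mu1_le[OF b assms(2)] digit_eq_0_if_mu1_le[OF b assms(3)] assms(4)
    by (simp_all add: c_def)
  have "finite J" unfolding J_def by simp
  have "LTk b (restrict f J) k j = LTk b f k j" if "j < n" for f j
    unfolding LTk_def using that high(1) J_def by (intro arg_cong2[where f="(mod)"] sum.cong) auto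
  then have "measure (random_L b n) {L \<in> space (random_L b n). \<forall>j<n. LTk b L k j = digit b k' j}
      = measure_pmf.prob (Pi_pmf J 0 p) {f. \<forall>j<n. LTk b f k j = digit b k' j}"
    unfolding random_L_def p_def
    by (intro measure_PiM_pmf_eq_Pi_pmf \<open>finite J\<close>) (auto simp: J_def)
  also have "\<dots> = measure_pmf.prob (Pi_pmf J 0 p)
      {f. \<forall>j\<in>{..<c}. (\<Sum>i\<in>{j..<c}. f (i, j) * digit b k i) mod b = digit b k' j}"
  proof (intro measure_eq_AE AE_pmfI)
    fix f assume "f \<in> set_pmf (Pi_pmf J 0 p)"
    then have f: "f \<in> PiE_dflt J 0 (set_pmf \<circ> p)" by (simp add: set_Pi_pmf \<open>finite J\<close>)
    have "f (i, j) = 0" if "i < j" "i < c" "j < n" for i j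
    proof -
      have "f (i, j) \<in> set_pmf (p (i, j))"
        using f that unfolding PiE_dflt_def J_def by auto
      then show ?thesis using that by (simp add: p_def entry_pmf_def)
    qed
    then show "f \<in> {f. \<forall>j<n. LTk b f k j = digit b k' j}
      \<longleftrightarrow> f \<in> {f. \<forall>j\<in>{..<c}. (\<Sum>i\<in>{j..<c}. f (i, j) * digit b k i) mod b = digit b k' j}"
      using LTk_eq_digits_iff_columns[OF \<open>c \<le> n\<close> _ high] by simp
  qed auto
  also have "\<dots> = 1 / ((real b - 1) * real b ^ (c - 1))"
    unfolding J_def p_def
    using digit_mu1_minus_1_nonzero[OF b assms(2)] digit_mu1_minus_1_nonzero[OF b assms(3)]
      mu1_pos[OF assms(2)] \<open>c \<le> n\<close> b
    by (intro measure_Pi_pmf_column_congruences assms(1)) (auto simp: c_def assms(4) digit_less)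
  finally show ?thesis unfolding c_def .
qed

theorem lemma2p13:
  fixes b k :: nat
  assumes "prime b" and "k \<ge> 1"
  defines "c \<equiv> mu1 b k"
  shows "(\<forall>L \<in> L_inf_inf b. \<exists>l. (\<forall>j. digit b l j = LTk b L k j) \<and> mu1 b l = c)
       \<and> (\<forall>k' n. k' \<ge> 1 \<longrightarrow> mu1 b k' = c \<longrightarrow> n \<ge> c \<longrightarrow>
            measure (random_L b n) {L \<in> space (random_L b n). \<forall>j<n. LTk b L k j = digit b k' j}
              = 1 / ((real b - 1) * real b ^ (c - 1)))"
proof -
  have "k \<noteq> 0" using assms(2) by simp
  then show ?thesis
    unfolding c_def
    using LTk_preserves_mu1[OF assms(1)] measure_random_L_LTk_eq_digits[OF assms(1)] by auto
qed

end
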